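(* Let $(\mathcal{A},\{\eta_n\}_{n\ge1})$ be an $NS_\infty$-algebra. Then $(\mathcal{A},\{\overline{\eta}_n\}_{n\ge1})$ is an $A_\infty$-algebra, where $\overline{\eta}_1(a)=\eta_1([1];a)$ and $\overline{\eta}_n(a_1,\dots,a_n)=\sum_{j=1}^{n+1}\eta_n([j];a_1,\dots,a_n)$ for $n\ge2$.
   Context: Over a field of characteristic $0$. An $A_\infty$-algebra: graded vector space $\mathcal{A}$ with degree $n-2$ maps $\mu_n:\mathcal{A}^{\otimes n}\to\mathcal{A}$ such that for all $k\ge1$ and homogeneous $a_1,\dots,a_k$: $\sum_{m+n=k+1}\sum_{i=1}^m(-1)^{i(n+1)+n(|a_1|+\cdots+|a_{i-1}|)}\mu_m(a_1,\dots,a_{i-1},\mu_n(a_i,\dots,a_{i+n-1}),a_{i+n},\dots,a_k)=0$. Let $C_n=\{[1],\dots,[n]\}$ (formal symbols). $\mathcal{O}(1)=\mathrm{Hom}(\mathbf{k}[C_1]\otimes\mathcal{A},\mathcal{A})$, $\mathcal{O}(n)=\mathrm{Hom}(\mathbf{k}[C_{n+1}]\otimes\mathcal{A}^{\otimes n},\mathcal{A})$ for $n\ge2$ (graded maps); call $C_1$, resp. $C_{n+1}$, the index set of $\mathcal{O}(n)$. For $g\in\mathcal{O}(n)$ write $g([*];-)$ for the sum of $g([j];-)$ over its index set, and set $g([j];-)=0$ if $[j]$ is not in its index set. For $f\in\mathcal{O}(m)$ of degree $m-2$, $g\in\mathcal{O}(n)$ of degree $n-2$, $1\le i\le m$, homogeneous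 $a_1,\dots,a_{m+n-1}$, put $\varepsilon=(-1)^{n(|a_1|+\cdots+|a_{i-1}|)}$ and $\bar g_\ast=g([*];a_i,\dots,a_{i+n-1})$; the (graded) partial composition $f\circ_ig\in\mathcal{O}(m+n-1)$ is $\varepsilon$ times: $f([r];a_1,\dots,a_{i-1},\bar g_*,a_{i+n},\dots)$ if $1\le r\le i-1$; $f([i];a_1,\dots,a_{i-1},g([r-i+1];a_i,\dots,a_{i+n-1}),a_{i+n},\dots)$ if $i\le r\le i+n-1$; $f([r-n+1];\dots,\bar g_*,\dots)$ if $i+n\le r\le m+n-1$; $f([i];\dots,g([n+1];a_i,\dots,a_{i+n-1}),\dots)+f([m+1];\dots,\bar g_*,\dots)$ if $r=m+n$ (for $[r]$ in the index set of $\mathcal{O}(m+n-1)$). An $NS_\infty$-algebra is $(\mathcal{A},\{\eta_n\}_{n\ge1})$ with $\eta_n\in\mathcal{O}(n)$ of degree $n-2$ such that for every $k\ge1$, every $[r]$ in the index set of $\mathcal{O}(k)$ and homogeneous $a_1,\dots,a_k$: $\sum_{m+n=k+1}\sum_{i=1}^m(-1)^{i(n+1)}(\eta_m\circ_i\eta_n)([r];a_1,\dots,a_k)=0$. *)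

theory Defs
  imports Main "HOL.Modules"
begin

definition sgnv :: "int \<Rightarrow> 'v::ab_group_add \<Rightarrow> 'v" where
  "sgnv e x = (if even e then x else - x)"

definition graded_vs :: "('k::field_char_0 \<Rightarrow> 'v::ab_group_add \<Rightarrow> 'v) \<Rightarrow> (int \<Rightarrow> 'v set) \<Rightarrow> bool" where
  "graded_vs scale G \<longleftrightarrow> module scale
     \<and> (\<forall>d. 0 \<in> G d \<and> (\<forall>x\<in>G d. \<forall>y\<in>G d. x + y \<in> G d) \<and> (\<forall>c. \<forall>x\<in>G d. scale c x \<in> G d))
     \<and> (\<forall>v. \<exists>D x. finite D \<and> (\<forall>d\<in>D. x d \<in> G d) \<and> v = (\<Sum>d\<in>D. x d))
     \<and> (\<forall>D x. finite D \<and> (\<forall>d\<in>D. x d \<in> G d) \<and> (\<Sum>d\<in>D. x d) = 0 \<longrightarrow> (\<forall>d\<in>D. x d = 0))"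

(* f, viewed on lists of length n, is linear in each of its n arguments
   (i.e. a linear map on A^{\<otimes> n}). *)
definition multilin :: "('k::field_char_0 \<Rightarrow> 'v::ab_group_add \<Rightarrow> 'v) \<Rightarrow> nat \<Rightarrow> ('v list \<Rightarrow> 'v) \<Rightarrow> bool" where
  "multilin scale n f \<longleftrightarrow> (\<forall>as p c x y. length as = n \<and> p < n \<longrightarrow>
      f (as[p := scale c x + y]) = scale c (f (as[p := x])) + f (as[p := y]))"

definition homog :: "(int \<Rightarrow> 'v set) \<Rightarrow> 'v list \<Rightarrow> int list \<Rightarrow> bool" where
  "homog G as ds \<longleftrightarrow> length ds = length as \<and> (\<forall>i<length as. as ! i \<in> G (ds ! i))"

definition graded_map :: "('k::field_char_0 \<Rightarrow> 'v::ab_group_add \<Rightarrow> 'v) \<Rightarrow> (int \<Rightarrow> 'v set) \<Rightarrow> nat \<Rightarrow> int \<Rightarrow> ('v list \<Rightarrow> 'v) \<Rightarrow> bool" where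
  "graded_map scale G n s f \<longleftrightarrow> multilin scale n f
     \<and> (\<forall>as ds. length as = n \<and> homog G as ds \<longrightarrow> f as \<in> G (sum_list ds + s))"

(* replace the block of n entries starting at (1-based) position i by x *)
definition ins_at :: "'v list \<Rightarrow> nat \<Rightarrow> nat \<Rightarrow> 'v \<Rightarrow> 'v list" where
  "ins_at as i n x = take (i - 1) as @ [x] @ drop (i - 1 + n) as"

definition block :: "'v list \<Rightarrow> nat \<Rightarrow> nat \<Rightarrow> 'v list" where
  "block as i n = take n (drop (i - 1) as)"

definition Ainf_algebra :: "('k::field_char_0 \<Rightarrow> 'v::ab_group_add \<Rightarrow> 'v) \<Rightarrow> (int \<Rightarrow> 'v set) \<Rightarrow> (nat \<Rightarrow> 'v list \<Rightarrow> 'v) \<Rightarrow> bool" where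
  "Ainf_algebra scale G \<mu> \<longleftrightarrow> graded_vs scale G
     \<and> (\<forall>n\<ge>1. graded_map scale G n (int n - 2) (\<mu> n))
     \<and> (\<forall>k\<ge>1. \<forall>as ds. length as = k \<and> homog G as ds \<longrightarrow>
          (\<Sum>n\<in>{1..k}. \<Sum>i\<in>{1..k + 1 - n}.
              sgnv (int i * (int n + 1) + int n * sum_list (take (i - 1) ds))
                (\<mu> (k + 1 - n) (ins_at as i n (\<mu> n (block as i n))))) = 0)"

(* index set of O(n): C_1 for n = 1, C_{n+1} for n \<ge> 2 *)
definition idxset :: "nat \<Rightarrow> nat set" where
  "idxset n = (if n = 1 then {1} else {1..n + 1})"

(* g([j];-) with the convention that it is 0 when [j] is not in the index set of O(n) *)
definition ev :: "nat \<Rightarrow> (nat \<Rightarrow> 'v list \<Rightarrow> 'v) \<Rightarrow> nat \<Rightarrow> 'v list \<Rightarrow> 'v::ab_group_add" where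
  "ev n g j as = (if j \<in> idxset n then g j as else 0)"

(* graded partial composition (f \<circ>_i g)([r]; as), f \<in> O(m), g \<in> O(n), ds the degrees of as *)
definition pcomp :: "nat \<Rightarrow> (nat \<Rightarrow> 'v list \<Rightarrow> 'v) \<Rightarrow> nat \<Rightarrow> (nat \<Rightarrow> 'v list \<Rightarrow> 'v)
     \<Rightarrow> nat \<Rightarrow> nat \<Rightarrow> 'v list \<Rightarrow> int list \<Rightarrow> 'v::ab_group_add" where
  "pcomp m f n g i r as ds =
     (let gbar = (\<Sum>j\<in>idxset n. ev n g j (block as i n));
          ins = ins_at as i n
      in sgnv (int n * sum_list (take (i - 1) ds))
        (if 1 \<le> r \<and> r \<le> i - 1 then ev m f r (ins gbar)
         else if i \<le> r \<and> r \<le> i + n - 1 then ev m f i (ins (ev n g (r - i + 1) (block as i n)))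
         else if i + n \<le> r \<and> r \<le> m + n - 1 then ev m f (r - n + 1) (ins gbar)
         else if r = m + n then ev m f i (ins (ev n g (n + 1) (block as i n))) + ev m f (m + 1) (ins gbar)
         else 0))"

(* NS_\<infinity>-algebra with \<eta> n \<in> O(n), \<eta> n j = \<eta>_n([j]; -) *)
definition NSinf_algebra :: "('k::field_char_0 \<Rightarrow> 'v::ab_group_add \<Rightarrow> 'v) \<Rightarrow> (int \<Rightarrow> 'v set) \<Rightarrow> (nat \<Rightarrow> nat \<Rightarrow> 'v list \<Rightarrow> 'v) \<Rightarrow> bool" where
  "NSinf_algebra scale G \<eta> \<longleftrightarrow> graded_vs scale G
     \<and> (\<forall>n\<ge>1. \<forall>j\<in>idxset n. graded_map scale G n (int n - 2) (\<eta> n j))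
     \<and> (\<forall>k\<ge>1. \<forall>r\<in>idxset k. \<forall>as ds. length as = k \<and> homog G as ds \<longrightarrow>
          (\<Sum>n\<in>{1..k}. \<Sum>i\<in>{1..k + 1 - n}.
              sgnv (int i * (int n + 1)) (pcomp (k + 1 - n) (\<eta> (k + 1 - n)) n (\<eta> n) i r as ds)) = 0)"

definition etabar :: "(nat \<Rightarrow> nat \<Rightarrow> 'v list \<Rightarrow> 'v) \<Rightarrow> nat \<Rightarrow> 'v list \<Rightarrow> 'v::ab_group_add" where
  "etabar \<eta> n as = (if n = 1 then \<eta> 1 1 as else (\<Sum>j\<in>{1..n + 1}. \<eta> n j as))"

end

theory Submission
  imports Defs
begin

(* In the sum over all labels [r] of (f \<circ>_i g)([r]; -), each term f([j]; ..., gbar, ...) with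
   j \<noteq> i and each term f([i]; ..., g([s]; ...), ...) occurs exactly once.  As f([i]; -) is
   linear in its i-th argument, the latter recombine into f([i]; ..., gbar, ...), so the sum
   is fbar(..., gbar, ...) times the Koszul sign of the partial composition.  Summing the
   NS relation over all labels [r] therefore gives the A-infinity relation for etabar. *)

lemma sgnv_sum: "sgnv e (sum f S) = (\<Sum>x\<in>S. sgnv e (f x))"
  by (simp add: sgnv_def sum_negf)

lemma sgnv_sgnv: "sgnv a (sgnv b x) = sgnv (a + b) x"
  by (auto simp: sgnv_def)

lemma finite_idxset [simp]: "finite (idxset n)"
  by (simp add: idxset_def)

lemma etabar_eq_sum_idxset: "etabar \<eta> n = (\<lambda>as. \<Sum>j\<in>idxset n. \<eta> n j as)"
  by (simp add: etabar_def idxset_def fun_eq_iff)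

lemma sum_ev_superset:
  assumes "finite S" "idxset n \<subseteq> S"
  shows "(\<Sum>j\<in>S. ev n g j as) = (\<Sum>j\<in>idxset n. g j as)"
proof -
  have "(\<Sum>j\<in>S. ev n g j as) = (\<Sum>j\<in>S \<inter> idxset n. g j as)"
    unfolding ev_def using assms(1) by (simp add: sum.inter_restrict)
  also have "S \<inter> idxset n = idxset n"
    using assms(2) by blast
  finally show ?thesis .
qed

lemma multilin_sum_slot:
  assumes "module scale" "multilin scale m F" "length L = m" "p < m" "finite S"
  shows "F (L[p := \<Sum>s\<in>S. x s]) = (\<Sum>s\<in>S. F (L[p := x s]))"
proof -
  have add: "F (L[p := a + b]) = F (L[p := a]) + F (L[p := b])" for a b
    using assms(1-4) module.scale_one unfolding multilin_def by metis
  have zero: "F (L[p := 0]) = 0"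
    using add[of 0 0] by simp
  from \<open>finite S\<close> show ?thesis
    by (induction S rule: finite_induct) (simp_all add: zero add)
qed

lemma ins_at_eq_list_update:
  "i - 1 \<le> length as \<Longrightarrow> ins_at as i n x = (ins_at as i n y)[i - 1 := x]"
  by (simp add: ins_at_def list_update_append)

lemma length_ins_at:
  "i - 1 + n \<le> length as \<Longrightarrow> length (ins_at as i n x) = length as + 1 - n"
  by (simp add: ins_at_def)

lemma multilin_ins_at_sum:
  assumes "module scale" "multilin scale m F" "m + n = length as + 1" "1 \<le> i" "i \<le> m"
    "finite S"
  shows "F (ins_at as i n (\<Sum>s\<in>S. x s)) = (\<Sum>s\<in>S. F (ins_at as i n (x s)))"
proof -
  define L where "L = ins_at as i n 0"
  have ins: "ins_at as i n y = L[i - 1 := y]" for y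
    unfolding L_def using assms(3-5) by (intro ins_at_eq_list_update) simp
  have "length L = m"
    unfolding L_def using assms(3-5) by (subst length_ins_at) simp_all
  then show ?thesis
    unfolding ins using assms(4,5) by (intro multilin_sum_slot[OF assms(1,2)] assms(6)) simp_all
qed

text \<open>The case distinction on the label r in the definition of partial composition:
  F j stands for f([j]; ..., gbar, ...) and H s for f([i]; ..., g([s]; ...), ...).\<close>

lemma sum_partial_composition_cases:
  fixes F H :: "nat \<Rightarrow> 'v::ab_group_add"
  assumes "1 \<le> n" "1 \<le> i" "i \<le> m"
  shows "(\<Sum>r\<in>{1..m + n}.
            if 1 \<le> r \<and> r \<le> i - 1 then F r
            else if i \<le> r \<and> r \<le> i + n - 1 then H (r - i + 1)
            else if i + n \<le> r \<and> r \<le> m + n - 1 then F (r - n + 1)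
            else if r = m + n then H (n + 1) + F (m + 1)
            else 0)
       = (\<Sum>j\<in>{1..m + 1}. F j) - F i + (\<Sum>s\<in>{1..n + 1}. H s)"
    (is "(\<Sum>r\<in>_. ?h r) = _")
proof -
  have "(\<Sum>r\<in>{1..m + n}. ?h r) = (\<Sum>r\<in>{1..<m + n}. ?h r) + ?h (m + n)"
    using assms by (simp add: atLeastLessThanSuc_atLeastAtMost[symmetric])
  also have "(\<Sum>r\<in>{1..<m + n}. ?h r)
      = (\<Sum>r\<in>{1..<i}. ?h r) + (\<Sum>r\<in>{i..<i + n}. ?h r) + (\<Sum>r\<in>{i + n..<m + n}. ?h r)"
    using assms by (simp add: sum.atLeastLessThan_concat)
  also have "(\<Sum>r\<in>{1..<i}. ?h r) = (\<Sum>j\<in>{1..<i}. F j)"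
    by (intro sum.cong) auto
  also have "(\<Sum>r\<in>{i..<i + n}. ?h r) = (\<Sum>s\<in>{1..n}. H s)"
    using assms by (intro sum.reindex_bij_witness[of _ "\<lambda>s. s + i - 1" "\<lambda>r. r - i + 1"]) auto
  also have "(\<Sum>r\<in>{i + n..<m + n}. ?h r) = (\<Sum>j\<in>{i + 1..m}. F j)"
    using assms by (intro sum.reindex_bij_witness[of _ "\<lambda>j. j + n - 1" "\<lambda>r. r - n + 1"]) auto
  also have "?h (m + n) = H (n + 1) + F (m + 1)"
    using assms by auto
  also have "(\<Sum>j\<in>{1..m + 1}. F j) = (\<Sum>j\<in>{1..<i}. F j) + F i + (\<Sum>j\<in>{i + 1..m}. F j) + F (m + 1)"
  proof -
    have "(\<Sum>j\<in>{1..m + 1}. F j) = (\<Sum>j\<in>{1..<i}. F j) + (\<Sum>j\<in>{i..m}. F j) + F (m + 1)"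
      using assms by (simp add: sum.atLeastLessThan_concat atLeastLessThanSuc_atLeastAtMost[symmetric])
    moreover have "(\<Sum>j\<in>{i..m}. F j) = F i + (\<Sum>j\<in>{i + 1..m}. F j)"
      using assms by (simp add: sum.atLeast_Suc_atMost)
    ultimately show ?thesis
      by (simp add: add.assoc)
  qed
  ultimately show ?thesis
    by (simp add: algebra_simps)
qed

lemma sum_pcomp_idxset:
  fixes f g :: "nat \<Rightarrow> 'v list \<Rightarrow> 'v::ab_group_add"
  assumes "module scale" "multilin scale m (f i)"
    and "m + n = length as + 1" "1 \<le> n" "1 \<le> i" "i \<le> m"
  shows "(\<Sum>r\<in>idxset (length as). pcomp m f n g i r as ds)
       = sgnv (int n * sum_list (take (i - 1) ds))
           (\<Sum>j\<in>idxset m. f j (ins_at as i n (\<Sum>j\<in>idxset n. g j (block as i n))))"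
proof -
  define B where "B = block as i n"
  define X where "X = ins_at as i n (\<Sum>j\<in>idxset n. g j B)"
  define F where "F j = ev m f j X" for j
  define H where "H s = ev m f i (ins_at as i n (ev n g s B))" for s
  define h where "h r = (if 1 \<le> r \<and> r \<le> i - 1 then F r
      else if i \<le> r \<and> r \<le> i + n - 1 then H (r - i + 1)
      else if i + n \<le> r \<and> r \<le> m + n - 1 then F (r - n + 1)
      else if r = m + n then H (n + 1) + F (m + 1)
      else 0)" for r
  define c where "c = int n * sum_list (take (i - 1) ds)"
  have "(\<Sum>j\<in>idxset n. ev n g j B) = (\<Sum>j\<in>idxset n. g j B)"
    by (rule sum_ev_superset) auto
  then have pcomp_eq: "pcomp m f n g i r as ds = sgnv c (h r)" for r
    unfolding pcomp_def Let_def h_def F_def H_def c_def X_def B_def by simp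
  have i_idx: "i \<in> idxset m"
    using assms(5,6) by (auto simp: idxset_def)
  have F_sum: "(\<Sum>j\<in>{1..m + 1}. F j) = (\<Sum>j\<in>idxset m. f j X)"
    unfolding F_def by (rule sum_ev_superset) (auto simp: idxset_def)
  have H_sum: "(\<Sum>s\<in>{1..n + 1}. H s) = F i"
  proof -
    have "(\<Sum>s\<in>{1..n + 1}. H s) = (\<Sum>s\<in>{1..n + 1}. f i (ins_at as i n (ev n g s B)))"
      using i_idx by (simp add: H_def ev_def)
    also have "\<dots> = f i (ins_at as i n (\<Sum>s\<in>{1..n + 1}. ev n g s B))"
      using assms by (intro multilin_ins_at_sum[symmetric]) simp_all
    also have "(\<Sum>s\<in>{1..n + 1}. ev n g s B) = (\<Sum>j\<in>idxset n. g j B)"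
      by (rule sum_ev_superset) (auto simp: idxset_def)
    finally show ?thesis
      using i_idx by (simp add: F_def X_def ev_def)
  qed
  have "(\<Sum>r\<in>idxset (length as). h r) = (\<Sum>j\<in>idxset m. f j X)"
  proof (cases "length as = 1")
    case True
    then have "m = 1" "n = 1" "i = 1"
      using assms(3-6) by auto
    with True show ?thesis
      by (simp add: idxset_def h_def H_def F_def ev_def X_def)
  next
    case False
    then have idx: "idxset (length as) = {1..m + n}"
      using assms(3-6) by (auto simp: idxset_def)
    show ?thesis
      unfolding idx h_def sum_partial_composition_cases[OF assms(4-6)] H_sum F_sum by simp
  qed
  then show ?thesis
    unfolding pcomp_eq sgnv_sum[symmetric] by (simp add: c_def X_def B_def)
qed

lemma graded_component_sum:
  assumes "graded_vs scale G" "finite J" "\<forall>j\<in>J. x j \<in> G d"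
  shows "(\<Sum>j\<in>J. x j) \<in> G d"
  using assms(2,3)
proof (induction J rule: finite_induct)
  case empty
  then show ?case using assms(1) by (simp add: graded_vs_def)
next
  case (insert a J)
  then show ?case using assms(1) by (simp add: graded_vs_def)
qed

lemma multilin_sum:
  fixes scale :: "'k::field_char_0 \<Rightarrow> 'v::ab_group_add \<Rightarrow> 'v"
  assumes "module scale" "\<forall>j\<in>J. multilin scale n (F j)"
  shows "multilin scale n (\<lambda>as. \<Sum>j\<in>J. F j as)"
  unfolding multilin_def
proof (intro allI impI)
  fix as :: "'v list" and p :: nat and c :: 'k and x y :: 'v
  assume "length as = n \<and> p < n"
  with assms(2) have "(\<Sum>j\<in>J. F j (as[p := scale c x + y]))
      = (\<Sum>j\<in>J. scale c (F j (as[p := x])) + F j (as[p := y]))"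
    by (intro sum.cong) (auto simp: multilin_def)
  then show "(\<Sum>j\<in>J. F j (as[p := scale c x + y]))
      = scale c (\<Sum>j\<in>J. F j (as[p := x])) + (\<Sum>j\<in>J. F j (as[p := y]))"
    by (simp add: sum.distrib module.scale_sum_right[OF assms(1)])
qed

lemma graded_map_sum:
  assumes "graded_vs scale G" "finite J" "\<forall>j\<in>J. graded_map scale G n s (F j)"
  shows "graded_map scale G n s (\<lambda>as. \<Sum>j\<in>J. F j as)"
proof -
  have "module scale"
    using assms(1) by (simp add: graded_vs_def)
  with assms(3) have "multilin scale n (\<lambda>as. \<Sum>j\<in>J. F j as)"
    by (intro multilin_sum) (auto simp: graded_map_def)
  moreover have "(\<Sum>j\<in>J. F j as) \<in> G (sum_list ds + s)"
    if "length as = n" "homog G as ds" for as ds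
    using assms that by (intro graded_component_sum) (auto simp: graded_map_def)
  ultimately show ?thesis
    by (simp add: graded_map_def)
qed

lemma graded_map_etabar:
  assumes "NSinf_algebra scale G \<eta>" "1 \<le> n"
  shows "graded_map scale G n (int n - 2) (etabar \<eta> n)"
  using assms unfolding etabar_eq_sum_idxset NSinf_algebra_def
  by (intro graded_map_sum) auto

lemma etabar_Ainf_relation:
  assumes NS: "NSinf_algebra scale G \<eta>" and "1 \<le> k" "length as = k" "homog G as ds"
  shows "(\<Sum>n\<in>{1..k}. \<Sum>i\<in>{1..k + 1 - n}.
           sgnv (int i * (int n + 1) + int n * sum_list (take (i - 1) ds))
             (etabar \<eta> (k + 1 - n) (ins_at as i n (etabar \<eta> n (block as i n))))) = 0"
proof -
  have "module scale"
    using NS by (simp add: NSinf_algebra_def graded_vs_def)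
  have "0 = (\<Sum>r\<in>idxset k. \<Sum>n\<in>{1..k}. \<Sum>i\<in>{1..k + 1 - n}.
      sgnv (int i * (int n + 1)) (pcomp (k + 1 - n) (\<eta> (k + 1 - n)) n (\<eta> n) i r as ds))"
    using NS assms(2-4) by (simp add: NSinf_algebra_def)
  also have "\<dots> = (\<Sum>n\<in>{1..k}. \<Sum>i\<in>{1..k + 1 - n}.
      sgnv (int i * (int n + 1)) (\<Sum>r\<in>idxset k. pcomp (k + 1 - n) (\<eta> (k + 1 - n)) n (\<eta> n) i r as ds))"
    unfolding sgnv_sum by (subst sum.swap) (simp add: sum.swap[of _ "idxset k"])
  also have "\<dots> = (\<Sum>n\<in>{1..k}. \<Sum>i\<in>{1..k + 1 - n}.
      sgnv (int i * (int n + 1) + int n * sum_list (take (i - 1) ds))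
        (etabar \<eta> (k + 1 - n) (ins_at as i n (etabar \<eta> n (block as i n)))))"
  proof (intro sum.cong refl)
    fix n i
    assume n: "n \<in> {1..k}" and i: "i \<in> {1..k + 1 - n}"
    then have "i \<in> idxset (k + 1 - n)"
      by (auto simp: idxset_def)
    with NS n have "multilin scale (k + 1 - n) (\<eta> (k + 1 - n) i)"
      by (auto simp: NSinf_algebra_def graded_map_def)
    then have "(\<Sum>r\<in>idxset (length as). pcomp (k + 1 - n) (\<eta> (k + 1 - n)) n (\<eta> n) i r as ds)
        = sgnv (int n * sum_list (take (i - 1) ds))
            (\<Sum>j\<in>idxset (k + 1 - n). \<eta> (k + 1 - n) j
               (ins_at as i n (\<Sum>j\<in>idxset n. \<eta> n j (block as i n))))"
      using n i assms(3) by (intro sum_pcomp_idxset[OF \<open>module scale\<close>]) auto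
    then show "sgnv (int i * (int n + 1))
        (\<Sum>r\<in>idxset k. pcomp (k + 1 - n) (\<eta> (k + 1 - n)) n (\<eta> n) i r as ds)
      = sgnv (int i * (int n + 1) + int n * sum_list (take (i - 1) ds))
          (etabar \<eta> (k + 1 - n) (ins_at as i n (etabar \<eta> n (block as i n))))"
      unfolding etabar_eq_sum_idxset assms(3) by (simp add: sgnv_sgnv)
  qed
  finally show ?thesis
    by simp
qed

theorem proposition6p13:
  fixes scale :: "'k::field_char_0 \<Rightarrow> 'v::ab_group_add \<Rightarrow> 'v"
    and G :: "int \<Rightarrow> 'v set"
    and \<eta> :: "nat \<Rightarrow> nat \<Rightarrow> 'v list \<Rightarrow> 'v"
  assumes "NSinf_algebra scale G \<eta>"
  shows "Ainf_algebra scale G (etabar \<eta>)"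
proof -
  have "graded_vs scale G"
    using assms by (simp add: NSinf_algebra_def)
  with graded_map_etabar[OF assms] etabar_Ainf_relation[OF assms] show ?thesis
    unfolding Ainf_algebra_def by blast
qed

end
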